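(* Assume $\theta_i<1$ for all $i$ and $\theta_j>0$ for some $j$. Then: (i) systems (A) and (B) have at least one equilibrium, and every equilibrium social power $x^*$ (i.e. every fixed point of $F$, equivalently the $x$-component of every equilibrium of (B)) satisfies: (a) $x^*\in\operatorname{int}\Delta_n$; (b) $x^*_i\ge 1/n$ for every $i\in\mathcal V_f$, and for $i\in\mathcal V_f$ one has $x^*_i=1/n$ if and only if $C_{ji}=0$ for all $j\in\mathcal V_p$; (c) $x^*_i>(1-\theta_i)/n$ for every $i\in\mathcal V_p$, and for $i\in\mathcal V_p$, if $C_{ji}=0$ for all $j\in\mathcal V_p$ then $x^*_i<1/n$; (d) $\max_i x^*_i<1/n+\theta_{\mathrm{ave}}$. (ii) If $\theta_{\max}<\dfrac{n}{n+2(1+\zeta)}$ with $\zeta=n\theta_{\mathrm{ave}}-\theta_{\min}$, then the equilibrium social power $x^*$ of systems (A) and (B) is unique.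
   Context: Let $n\ge 2$, $\mathbf 1_n$ the all-ones vector, $I_n$ the identity matrix, $\Delta_n=\{x\in\mathbb R^n: x\ge 0,\ \mathbf 1_n^Tx=1\}$, $\operatorname{int}\Delta_n=\{x\in\mathbb R^n: x>0,\ \mathbf 1_n^Tx=1\}$. Let $C\in\mathbb R^{n\times n}$ be a nonnegative row-stochastic matrix with zero diagonal, $\theta=(\theta_1,\dots,\theta_n)\in[0,1]^n$, $\Theta=\mathrm{diag}(\theta)$, and for $x\in\mathbb R^n$, $W(x)=\mathrm{diag}(x)+(I_n-\mathrm{diag}(x))C$. Let $\theta_{\min}=\min_j\theta_j$, $\theta_{\mathrm{ave}}=\frac1n\sum_j\theta_j$, $\theta_{\max}=\max_j\theta_j$. Let $\mathcal V_f=\{i:\theta_i=0\}$ (fully stubborn individuals) and $\mathcal V_p=\{i:\theta_i>0\}$ (partially stubborn individuals). System (A): $x(s+1)=F(x(s))$, $x(0)\in\Delta_n$, where $F(x)=(I_n-\Theta)(I_n-W(x)^T\Theta)^{-1}\mathbf 1_n/n$; an equilibrium is $x^*\in\Delta_n$ with $F(x^* )=x^*$. System (B): $V(k+1)=\Theta W(x(k))V(k)+I_n-\Theta$, $x(k+1)=V(k+1)^T\mathbf 1_n/n$, with $V(0)=I_n$, $x(0)\in\Delta_n$; an equilibrium is a pair $(V^*,x^* )$ with $V^*$ row-stochastic, $x^*\in\Delta_n$, $V^*=\Theta W(x^* )V^*+I_n-\Theta$, $x^*=(V^* )^T\mathbf 1_n/n$; $x^*$ is then called its equilibrium social power. *)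

theory Defs
  imports "HOL-Analysis.Analysis"
begin

definition diag_mat :: "real^'n \<Rightarrow> real^'n^'n" where
  "diag_mat v = (\<chi> i j. if i = j then v $ i else 0)"

definition ones_vec :: "real^'n" where
  "ones_vec = (\<chi> i. 1)"

definition row_stochastic :: "real^'n^'n \<Rightarrow> bool" where
  "row_stochastic A \<longleftrightarrow> (\<forall>i j. A $ i $ j \<ge> 0) \<and> (\<forall>i. (\<Sum>j\<in>UNIV. A $ i $ j) = 1)"

definition zero_diag :: "real^'n^'n \<Rightarrow> bool" where
  "zero_diag A \<longleftrightarrow> (\<forall>i. A $ i $ i = 0)"

definition std_simplex :: "(real^'n) set" where
  "std_simplex = {x. (\<forall>i. x $ i \<ge> 0) \<and> (\<Sum>i\<in>UNIV. x $ i) = 1}"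

definition int_std_simplex :: "(real^'n) set" where
  "int_std_simplex = {x. (\<forall>i. x $ i > 0) \<and> (\<Sum>i\<in>UNIV. x $ i) = 1}"

definition Wmat :: "real^'n^'n \<Rightarrow> real^'n \<Rightarrow> real^'n^'n" where
  "Wmat C x = diag_mat x + (mat 1 - diag_mat x) ** C"

definition Fmap :: "real^'n^'n \<Rightarrow> real^'n \<Rightarrow> real^'n \<Rightarrow> real^'n" where
  "Fmap C \<theta> x = (mat 1 - diag_mat \<theta>) *v
      (matrix_inv (mat 1 - transpose (Wmat C x) ** diag_mat \<theta>) *v
        ((1 / real CARD('n)) *\<^sub>R ones_vec))"

definition equilibrium_A :: "real^'n^'n \<Rightarrow> real^'n \<Rightarrow> real^'n \<Rightarrow> bool" where
  "equilibrium_A C \<theta> x \<longleftrightarrow> x \<in> std_simplex \<and> Fmap C \<theta> x = x"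

definition equilibrium_B :: "real^'n^'n \<Rightarrow> real^'n \<Rightarrow> real^'n^'n \<Rightarrow> real^'n \<Rightarrow> bool" where
  "equilibrium_B C \<theta> V x \<longleftrightarrow> row_stochastic V \<and> x \<in> std_simplex \<and>
     V = diag_mat \<theta> ** Wmat C x ** V + mat 1 - diag_mat \<theta> \<and>
     x = transpose V *v ((1 / real CARD('n)) *\<^sub>R ones_vec)"

definition theta_min :: "real^'n \<Rightarrow> real" where
  "theta_min \<theta> = Min (range (\<lambda>j. \<theta> $ j))"
definition theta_max :: "real^'n \<Rightarrow> real" where
  "theta_max \<theta> = Max (range (\<lambda>j. \<theta> $ j))"
definition theta_ave :: "real^'n \<Rightarrow> real" where
  "theta_ave \<theta> = (\<Sum>j\<in>UNIV. \<theta> $ j) / real CARD('n)"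

definition eq_power_props :: "real^'n^'n \<Rightarrow> real^'n \<Rightarrow> real^'n \<Rightarrow> bool" where
  "eq_power_props C \<theta> x \<longleftrightarrow>
     x \<in> int_std_simplex \<and>
     (\<forall>i. \<theta> $ i = 0 \<longrightarrow>
        x $ i \<ge> 1 / real CARD('n) \<and>
        (x $ i = 1 / real CARD('n) \<longleftrightarrow> (\<forall>j. \<theta> $ j > 0 \<longrightarrow> C $ j $ i = 0))) \<and>
     (\<forall>i. \<theta> $ i > 0 \<longrightarrow>
        x $ i > (1 - \<theta> $ i) / real CARD('n) \<and>
        ((\<forall>j. \<theta> $ j > 0 \<longrightarrow> C $ j $ i = 0) \<longrightarrow> x $ i < 1 / real CARD('n))) \<and>
     Max (range (\<lambda>i. x $ i)) < 1 / real CARD('n) + theta_ave \<theta>"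

end

theory Submission
  imports Defs
begin

text \<open>Write \<open>M(x) = \<Theta> W(x)\<close>. Its rows are nonnegative with sums \<open>\<theta>\<^sub>j < 1\<close>, so a minimum
  principle makes \<open>I - M(x)\<close> invertible with a nonnegative inverse. Both a fixed point of \<open>F\<close>
  and the social power of an equilibrium of (B) satisfy \<open>y (I - M(x)) = \<one>/n\<close> for
  \<open>y = (I - \<Theta>)\<^sup>-\<^sup>1 x\<close>. Pairing this with \<open>(I - M(x)) c = (1 - \<theta>\<^sub>i) e\<^sub>i\<close> gives
  \<open>x\<^sub>i = (\<Sum>\<^sub>j c\<^sub>j)/n\<close>, where \<open>0 \<le> c \<le> 1\<close> and \<open>c\<^sub>j \<le> \<theta>\<^sub>j\<close> for \<open>j \<noteq> i\<close>; this yields the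
  bounds (a)-(d) and shows that \<open>F\<close> maps the simplex into itself, so Brouwer's theorem gives
  existence. For uniqueness, subtracting the equations of two equilibria \<open>x, y\<close> and summing
  absolute values gives \<open>\<Sum>\<^sub>k |x\<^sub>k - y\<^sub>k| (1 - 2 \<theta>\<^sub>k y\<^sub>k/(1 - \<theta>\<^sub>k)) \<le> 0\<close>, and the hypothesis on
  \<open>\<theta>\<^sub>m\<^sub>a\<^sub>x\<close> together with \<open>y\<^sub>k \<le> (1 + \<zeta>)/n\<close> makes every weight positive.\<close>

lemma diag_mat_mult_component: "(diag_mat v ** A) $ i $ j = v $ i * A $ i $ j"
  by (simp add: diag_mat_def matrix_matrix_mult_def if_distrib[of "\<lambda>t. t * _"] cong: if_cong)

lemma mult_diag_mat_component: "(A ** diag_mat v) $ i $ j = A $ i $ j * v $ j"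
  by (simp add: diag_mat_def matrix_matrix_mult_def if_distrib[of "\<lambda>t. _ * t"] cong: if_cong)

lemma diag_mat_mult_vec_component: "(diag_mat v *v y) $ i = v $ i * y $ i"
  by (simp add: diag_mat_def matrix_vector_mult_def if_distrib[of "\<lambda>t. t * _"] cong: if_cong)

lemma vector_mult_diag_mat: "y v* diag_mat v = diag_mat v *v y"
  by (simp add: vec_eq_iff vector_matrix_mult_def diag_mat_mult_vec_component)
    (simp add: diag_mat_def if_distrib[of "\<lambda>t. _ * t"] cong: if_cong)

lemma mat_one_minus_diag_mat: "mat 1 - diag_mat v = diag_mat (\<chi> i. 1 - v $ i)"
  by (simp add: vec_eq_iff diag_mat_def mat_def)

lemma matrix_vector_mult_component: "(A *v v) $ i = (\<Sum>j\<in>UNIV. A $ i $ j * v $ j)"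
  by (simp add: matrix_vector_mult_def)

lemma vector_matrix_mult_component: "(v v* A) $ j = (\<Sum>i\<in>UNIV. v $ i * A $ i $ j)"
  by (simp add: vector_matrix_mult_def)

lemma mat_one_component: "(mat 1 :: real^'n^'n) $ i $ j = (if i = j then 1 else 0)"
  by (simp add: mat_def)

lemma matrix_diff_rdistrib: "((A :: 'a::ring_1^'n^'m) - B) ** C = A ** C - B ** C"
  by (simp add: matrix_matrix_mult_def vec_eq_iff algebra_simps sum_subtractf)

lemma matrix_inv_right: "invertible A \<Longrightarrow> A ** matrix_inv A = mat 1"
  and matrix_inv_left: "invertible A \<Longrightarrow> matrix_inv A ** A = mat 1"
  unfolding matrix_inv_def invertible_def by (metis (mono_tags, lifting) someI_ex)+

lemma matrix_inv_transpose:
  fixes A :: "real^'n^'n"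
  assumes "invertible A"
  shows "matrix_inv (transpose A) = transpose (matrix_inv A)"
proof -
  have "transpose (matrix_inv A) ** transpose A = mat 1"
    by (metis assms matrix_inv_right matrix_transpose_mul transpose_mat)
  then have "transpose (matrix_inv A) = matrix_inv (transpose A)"
    using matrix_inv_right[OF transpose_invertible[OF assms]]
    by (metis matrix_mul_assoc matrix_mul_lid matrix_mul_rid)
  then show ?thesis ..
qed

lemma continuous_on_det:
  assumes "\<And>i j. continuous_on S (\<lambda>x. F x $ i $ j)"
  shows "continuous_on S (\<lambda>x. det (F x :: real^'m^'m))"
  unfolding det_def by (intro continuous_intros assms)

lemma continuous_on_matrix_inv_mult:
  fixes A :: "'a::topological_space \<Rightarrow> real^'n^'n"
  assumes A: "\<And>i j. continuous_on S (\<lambda>x. A x $ i $ j)"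
    and invertible: "\<And>x. x \<in> S \<Longrightarrow> invertible (A x)" and b: "continuous_on S b"
  shows "continuous_on S (\<lambda>x. matrix_inv (A x) *v b x)"
proof -
  let ?cramer = "\<lambda>x. \<chi> k. det (\<chi> i j. if j = k then b x $ i else A x $ i $ j) / det (A x)"
  have "matrix_inv (A x) *v b x = ?cramer x" if "x \<in> S" for x
  proof -
    have "A x *v (matrix_inv (A x) *v b x) = b x"
      by (simp add: matrix_vector_mul_assoc matrix_inv_right invertible[OF that])
    then show ?thesis
      using cramer invertible[OF that] invertible_det_nz by blast
  qed
  moreover have "continuous_on S (\<lambda>x. (\<chi> i j. if j = k then b x $ i else A x $ i $ j) $ i $ j)"
    for i j k by (cases "j = k") (simp_all add: A b continuous_on_component)
  then have "continuous_on S ?cramer"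
    by (intro continuous_on_vec_lambda continuous_on_divide continuous_on_det A)
      (auto simp: invertible invertible_det_nz[symmetric])
  ultimately show ?thesis by (rule continuous_on_cong[THEN iffD2, OF refl])
qed

lemma std_simplex_nonneg: "x \<in> std_simplex \<Longrightarrow> 0 \<le> x $ j"
  by (simp add: std_simplex_def)

lemma std_simplex_le_1: assumes "x \<in> std_simplex" shows "x $ j \<le> 1"
proof -
  have "x $ j \<le> (\<Sum>i\<in>UNIV. x $ i)"
    by (rule member_le_sum) (use assms in \<open>auto simp: std_simplex_def\<close>)
  then show ?thesis using assms by (simp add: std_simplex_def)
qed

lemma std_simplex_add_le_1:
  assumes "x \<in> std_simplex" "k \<noteq> l" shows "x $ k + x $ l \<le> 1"
proof -
  have "(\<Sum>j\<in>{k,l}. x $ j) \<le> (\<Sum>j\<in>UNIV. x $ j)"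
    by (rule sum_mono2) (use assms in \<open>auto simp: std_simplex_def\<close>)
  then show ?thesis using assms by (simp add: std_simplex_def)
qed

lemma compact_std_simplex: "compact (std_simplex :: (real^'n) set)"
proof -
  have "std_simplex = (\<Inter>i. {x::real^'n. 0 \<le> x $ i}) \<inter> {x. (\<Sum>i\<in>UNIV. x $ i) = 1}"
    by (auto simp: std_simplex_def)
  also have "closed \<dots>"
    by (intro closed_Int closed_INT ballI closed_Collect_le closed_Collect_eq continuous_intros)
  finally have "closed (std_simplex :: (real^'n) set)" .
  moreover have "std_simplex \<subseteq> cbox (0::real^'n) ones_vec"
    by (auto simp: mem_box_cart ones_vec_def std_simplex_nonneg std_simplex_le_1)
  ultimately show ?thesis
    using bounded_cbox bounded_subset compact_eq_bounded_closed by blast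
qed

lemma convex_std_simplex: "convex (std_simplex :: (real^'n) set)"
  unfolding convex_def std_simplex_def by (auto simp: sum.distrib simp flip: sum_distrib_left)

definition uniform_vec :: "real^'n" where
  "uniform_vec = (1 / real CARD('n)) *\<^sub>R ones_vec"

lemma uniform_vec_component [simp]: "(uniform_vec :: real^'n) $ j = 1 / real CARD('n)"
  by (simp add: uniform_vec_def ones_vec_def)

lemma uniform_vec_in_std_simplex: "uniform_vec \<in> std_simplex"
  by (simp add: std_simplex_def)

lemma Wmat_component: "Wmat C x $ i $ j = (if i = j then x $ i else 0) + (1 - x $ i) * C $ i $ j"
  by (simp add: Wmat_def mat_one_minus_diag_mat diag_mat_mult_component) (simp add: diag_mat_def)

lemma Wmat_row_sum: "row_stochastic C \<Longrightarrow> (\<Sum>k\<in>UNIV. Wmat C x $ j $ k) = 1"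
  by (simp add: Wmat_component sum.distrib row_stochastic_def flip: sum_distrib_left)

lemma Wmat_nonneg: "row_stochastic C \<Longrightarrow> 0 \<le> x $ j \<Longrightarrow> x $ j \<le> 1 \<Longrightarrow> 0 \<le> Wmat C x $ j $ k"
  by (auto simp: Wmat_component row_stochastic_def)

lemma mat_one_minus_mult_component:
  fixes M :: "real^'n^'n"
  shows "((mat 1 - M) *v v) $ j = v $ j - (\<Sum>k\<in>UNIV. M $ j $ k * v $ k)"
  unfolding matrix_vector_mult_diff_rdistrib by (simp add: matrix_vector_mult_component)

lemma substochastic_solution_nonneg:
  fixes M :: "real^'n^'n"
  assumes M_nonneg: "\<forall>j k. 0 \<le> M $ j $ k" and row_sum: "\<forall>j. (\<Sum>k\<in>UNIV. M $ j $ k) < 1"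
    and sol: "(mat 1 - M) *v v = b" and b_nonneg: "\<forall>j. 0 \<le> b $ j"
  shows "0 \<le> v $ j"
proof (rule ccontr)
  assume "\<not> 0 \<le> v $ j"
  have "Min (range (\<lambda>j. v $ j)) \<in> range (\<lambda>j. v $ j)" by (rule Min_in) auto
  then obtain j0 where j0: "v $ j0 = Min (range (\<lambda>j. v $ j))" by (metis rangeE)
  have min: "v $ j0 \<le> v $ k" for k unfolding j0 by (rule Min_le) auto
  with \<open>\<not> 0 \<le> v $ j\<close> have neg: "v $ j0 < 0" by (meson le_less_trans not_le)
  have "(\<Sum>k\<in>UNIV. M $ j0 $ k) * v $ j0 = (\<Sum>k\<in>UNIV. M $ j0 $ k * v $ j0)"
    by (simp add: sum_distrib_right)
  also have "\<dots> \<le> (\<Sum>k\<in>UNIV. M $ j0 $ k * v $ k)"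
    by (rule sum_mono) (simp add: M_nonneg min mult_left_mono)
  also have "\<dots> = v $ j0 - b $ j0"
    using mat_one_minus_mult_component[of M v j0] sol by simp
  also have "\<dots> \<le> v $ j0" using b_nonneg by simp
  finally have "(\<Sum>k\<in>UNIV. M $ j0 $ k) * v $ j0 \<le> 1 * v $ j0" by simp
  with mult_strict_right_mono_neg[OF row_sum[rule_format, of j0] neg] show False
    by (simp add: not_le[symmetric])
qed

lemma substochastic_invertible:
  fixes M :: "real^'n^'n"
  assumes "\<forall>j k. 0 \<le> M $ j $ k" "\<forall>j. (\<Sum>k\<in>UNIV. M $ j $ k) < 1"
  shows "invertible (mat 1 - M)"
  unfolding invertible_left_inverse matrix_left_invertible_ker
proof (intro allI impI)
  fix v assume v: "(mat 1 - M) *v v = 0"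
  then have "(mat 1 - M) *v (- v) = 0"
    by (simp add: vec_eq_iff matrix_vector_mult_component sum_negf)
  then have "0 \<le> (- v) $ j" for j
    by (rule substochastic_solution_nonneg[OF assms]) simp
  moreover have "0 \<le> v $ j" for j
    using v by (rule substochastic_solution_nonneg[OF assms]) simp
  ultimately show "v = 0" by (simp add: vec_eq_iff order_antisym)
qed

lemma vector_mat_one_minus_mult_component:
  fixes M :: "real^'n^'n"
  shows "(v v* (mat 1 - M)) $ j = v $ j - (\<Sum>k\<in>UNIV. v $ k * M $ k $ j)"
  unfolding vector_matrix_mult_diff_rdistrib by (simp add: vector_matrix_mult_component)

locale influence_model =
  fixes C :: "real^'n^'n" and \<theta> :: "real^'n"
  assumes row_stochastic_C: "row_stochastic C"
    and \<theta>_nonneg: "\<forall>i. 0 \<le> \<theta> $ i" and \<theta>_less_1: "\<forall>i. \<theta> $ i < 1"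
begin

abbreviation W :: "real^'n \<Rightarrow> real^'n^'n" where "W x \<equiv> Wmat C x"

definition M :: "real^'n \<Rightarrow> real^'n^'n" where "M x = diag_mat \<theta> ** W x"

lemma C_nonneg: "0 \<le> C $ i $ j"
  using row_stochastic_C by (simp add: row_stochastic_def)

lemma C_row_sum: "(\<Sum>j\<in>UNIV. C $ i $ j) = 1"
  using row_stochastic_C by (simp add: row_stochastic_def)

lemma one_minus_\<theta>_pos: "0 < 1 - \<theta> $ j"
  using \<theta>_less_1 by simp

lemma W_nonneg: "x \<in> std_simplex \<Longrightarrow> 0 \<le> W x $ j $ k"
  by (simp add: Wmat_nonneg row_stochastic_C std_simplex_nonneg std_simplex_le_1)

lemma M_component: "M x $ j $ k = \<theta> $ j * W x $ j $ k"
  by (simp add: M_def diag_mat_mult_component)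

lemma M_nonneg: "x \<in> std_simplex \<Longrightarrow> 0 \<le> M x $ j $ k"
  using \<theta>_nonneg W_nonneg by (simp add: M_component)

lemma M_row_sum: "(\<Sum>k\<in>UNIV. M x $ j $ k) = \<theta> $ j"
  by (simp add: M_component Wmat_row_sum[OF row_stochastic_C] flip: sum_distrib_left)

lemma invertible_I_minus_M: "x \<in> std_simplex \<Longrightarrow> invertible (mat 1 - M x)"
  using \<theta>_less_1 by (intro substochastic_invertible) (auto simp: M_nonneg M_row_sum)

lemma I_minus_M_solution_nonneg:
  "x \<in> std_simplex \<Longrightarrow> (mat 1 - M x) *v c = r \<Longrightarrow> \<forall>j. 0 \<le> r $ j \<Longrightarrow> 0 \<le> c $ j"
  using \<theta>_less_1 by (intro substochastic_solution_nonneg) (auto simp: M_nonneg M_row_sum)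

lemma I_minus_M_ones: "(mat 1 - M x) *v ones_vec = (\<chi> j. 1 - \<theta> $ j)"
  by (simp add: vec_eq_iff mat_one_minus_mult_component ones_vec_def M_row_sum)

lemma transpose_I_minus_M: "mat 1 - transpose (W x) ** diag_mat \<theta> = transpose (mat 1 - M x)"
  by (simp add: vec_eq_iff transpose_def mult_diag_mat_component M_component mat_one_component
      mult.commute)

lemma Fmap_eq:
  assumes "x \<in> std_simplex"
  shows "Fmap C \<theta> x = (mat 1 - diag_mat \<theta>) *v (uniform_vec v* matrix_inv (mat 1 - M x))"
  by (simp add: Fmap_def transpose_I_minus_M matrix_inv_transpose invertible_I_minus_M[OF assms]
      flip: uniform_vec_def)

lemma equilibrium_B_matrix_eq_iff:
  "V = diag_mat \<theta> ** W x ** V + mat 1 - diag_mat \<theta> \<longleftrightarrow> (mat 1 - M x) ** V = mat 1 - diag_mat \<theta>"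
  unfolding M_def matrix_diff_rdistrib matrix_mul_lid by (auto simp: algebra_simps)

definition scaled_power :: "real^'n \<Rightarrow> real^'n" where
  "scaled_power x = (\<chi> k. x $ k / (1 - \<theta> $ k))"

lemma scaled_power_component: "scaled_power x $ k = x $ k / (1 - \<theta> $ k)"
  by (simp add: scaled_power_def)

lemma power_eq_scaled_power: "x $ k = (1 - \<theta> $ k) * scaled_power x $ k"
  using one_minus_\<theta>_pos[of k] by (simp add: scaled_power_component)

lemma scaled_power_nonneg: "x \<in> std_simplex \<Longrightarrow> 0 \<le> scaled_power x $ k"
  using one_minus_\<theta>_pos[of k] by (simp add: scaled_power_component std_simplex_nonneg)

text \<open>The fixed-point equation \<open>x = F(x)\<close>, rewritten: \<open>(I - \<Theta>)\<^sup>-\<^sup>1 x\<close> solves the transposed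
  system \<open>y (I - \<Theta> W(x)) = \<one>/n\<close>.\<close>
definition equilibrium_power :: "real^'n \<Rightarrow> bool" where
  "equilibrium_power x \<longleftrightarrow> x \<in> std_simplex \<and> scaled_power x v* (mat 1 - M x) = uniform_vec"

lemma equilibrium_power_if_fixed:
  assumes x: "x \<in> std_simplex"
    and fixed: "x = (mat 1 - diag_mat \<theta>) *v (uniform_vec v* matrix_inv (mat 1 - M x))"
  shows "equilibrium_power x"
proof -
  define y where "y = uniform_vec v* matrix_inv (mat 1 - M x)"
  have "y v* (mat 1 - M x) = uniform_vec"
    by (simp add: y_def vector_matrix_mul_assoc matrix_inv_left invertible_I_minus_M[OF x])
  moreover have "x $ j = (1 - \<theta> $ j) * y $ j" for j
    using arg_cong[OF fixed, of "\<lambda>v. v $ j"]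
    by (simp add: y_def mat_one_minus_diag_mat diag_mat_mult_vec_component)
  then have "scaled_power x = y"
    using \<theta>_less_1 by (simp add: vec_eq_iff scaled_power_component) (metis less_irrefl)
  ultimately show ?thesis using x by (simp add: equilibrium_power_def)
qed

lemma equilibrium_A_imp_equilibrium_power: "equilibrium_A C \<theta> x \<Longrightarrow> equilibrium_power x"
  unfolding equilibrium_A_def using Fmap_eq equilibrium_power_if_fixed by metis

lemma equilibrium_B_imp_equilibrium_power:
  assumes "equilibrium_B C \<theta> V x"
  shows "equilibrium_power x"
proof -
  have x: "x \<in> std_simplex" and x_eq: "x = uniform_vec v* V"
    and "(mat 1 - M x) ** V = mat 1 - diag_mat \<theta>"
    using assms unfolding equilibrium_B_def equilibrium_B_matrix_eq_iff uniform_vec_def by auto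
  then have "matrix_inv (mat 1 - M x) ** (mat 1 - M x) ** V
      = matrix_inv (mat 1 - M x) ** (mat 1 - diag_mat \<theta>)"
    by (simp flip: matrix_mul_assoc)
  then have V: "V = matrix_inv (mat 1 - M x) ** (mat 1 - diag_mat \<theta>)"
    by (simp add: matrix_inv_left invertible_I_minus_M[OF x])
  have "x = (uniform_vec v* matrix_inv (mat 1 - M x)) v* (mat 1 - diag_mat \<theta>)"
    using x_eq[unfolded V] by (simp add: vector_matrix_mul_assoc)
  then have "x = (mat 1 - diag_mat \<theta>) *v (uniform_vec v* matrix_inv (mat 1 - M x))"
    by (simp add: mat_one_minus_diag_mat vector_mult_diag_mat)
  with x show ?thesis by (rule equilibrium_power_if_fixed)
qed

lemma transposed_solution_pairing:
  assumes "y v* (mat 1 - M x) = uniform_vec" and "(mat 1 - M x) *v c = r"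
  shows "inner r y = (\<Sum>j\<in>UNIV. c $ j) / real CARD('n)"
proof -
  have "inner r y = inner y ((mat 1 - M x) *v c)"
    by (simp add: assms(2) inner_commute)
  also have "\<dots> = inner (y v* (mat 1 - M x)) c"
    by (simp add: dot_lmul_matrix)
  finally show ?thesis
    by (simp add: assms(1) inner_vec_def sum_divide_distrib)
qed

lemma column_solution:
  assumes x: "x \<in> std_simplex"
  obtains c where "(mat 1 - M x) *v c = (1 - \<theta> $ i) *\<^sub>R axis i 1"
    and "\<forall>j. 0 \<le> c $ j" and "\<forall>j. c $ j \<le> 1"
proof
  define r :: "real^'n" where "r = (1 - \<theta> $ i) *\<^sub>R axis i 1"
  define c where "c = matrix_inv (mat 1 - M x) *v r"
  have c: "(mat 1 - M x) *v c = r"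
    by (simp add: c_def matrix_vector_mul_assoc matrix_inv_right invertible_I_minus_M[OF x])
  then show "(mat 1 - M x) *v c = (1 - \<theta> $ i) *\<^sub>R axis i 1" by (simp add: r_def)
  have r_bounds: "0 \<le> r $ j" "r $ j \<le> 1 - \<theta> $ j" for j
    using one_minus_\<theta>_pos[of i] one_minus_\<theta>_pos[of j] by (auto simp: r_def axis_def)
  show "\<forall>j. 0 \<le> c $ j"
    using I_minus_M_solution_nonneg[OF x c] r_bounds by blast
  have "(mat 1 - M x) *v (ones_vec - c) = (\<chi> j. 1 - \<theta> $ j) - r"
    by (simp add: matrix_vector_mult_diff_distrib I_minus_M_ones c)
  then have "0 \<le> (ones_vec - c) $ j" for j
    by (rule I_minus_M_solution_nonneg[OF x]) (simp add: r_bounds)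
  then show "\<forall>j. c $ j \<le> 1" by (simp add: ones_vec_def)
qed

lemma column_le:
  assumes x: "x \<in> std_simplex" and c: "(mat 1 - M x) *v c = r" and c_le_1: "\<forall>k. c $ k \<le> 1"
  shows "c $ j \<le> \<theta> $ j + r $ j"
proof -
  have "c $ j = (\<Sum>k\<in>UNIV. M x $ j $ k * c $ k) + r $ j"
    using arg_cong[OF c, of "\<lambda>v. v $ j"] by (simp add: mat_one_minus_mult_component)
  also have "\<dots> \<le> (\<Sum>k\<in>UNIV. M x $ j $ k) + r $ j"
    using c_le_1 M_nonneg[OF x] by (auto intro!: sum_mono mult_left_le)
  finally show ?thesis by (simp add: M_row_sum)
qed

lemma column_less_\<theta>:
  assumes x: "x \<in> std_simplex" and c: "(mat 1 - M x) *v c = r" and c_le_1: "\<forall>k. c $ k \<le> 1"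
    and r_j: "r $ j = 0" and \<theta>_j: "0 < \<theta> $ j" and x_j: "0 < x $ j" "x $ j < 1"
  shows "c $ j < \<theta> $ j"
proof -
  have W_sum: "(\<Sum>k\<in>UNIV. W x $ j $ k * c $ k)
      = x $ j * c $ j + (1 - x $ j) * (\<Sum>k\<in>UNIV. C $ j $ k * c $ k)"
    by (simp add: Wmat_component distrib_right sum.distrib sum_distrib_left mult.assoc
        if_distrib[of "\<lambda>t. t * _"] cong: if_cong)
  have "c $ j = (\<Sum>k\<in>UNIV. M x $ j $ k * c $ k)"
    using arg_cong[OF c, of "\<lambda>v. v $ j"] r_j by (simp add: mat_one_minus_mult_component)
  also have "\<dots> = \<theta> $ j * (x $ j * c $ j + (1 - x $ j) * (\<Sum>k\<in>UNIV. C $ j $ k * c $ k))"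
    unfolding W_sum[symmetric] by (simp add: M_component sum_distrib_left mult.assoc)
  also have "\<dots> < \<theta> $ j * 1"
  proof (rule mult_strict_left_mono[OF _ \<theta>_j])
    have "(\<Sum>k\<in>UNIV. C $ j $ k * c $ k) \<le> (\<Sum>k\<in>UNIV. C $ j $ k)"
      using c_le_1 C_nonneg by (auto intro!: sum_mono mult_left_le)
    then have "(1 - x $ j) * (\<Sum>k\<in>UNIV. C $ j $ k * c $ k) \<le> 1 - x $ j"
      using x_j by (simp add: C_row_sum mult_left_le)
    moreover have "c $ j < 1"
      using column_le[OF x c c_le_1, of j] r_j \<theta>_less_1 by (metis add_0_right le_less_trans)
    then have "x $ j * c $ j < x $ j" using x_j by simp
    ultimately show "x $ j * c $ j + (1 - x $ j) * (\<Sum>k\<in>UNIV. C $ j $ k * c $ k) < 1"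
      by linarith
  qed
  finally show ?thesis by simp
qed

lemma equilibrium_power_simplex: "equilibrium_power x \<Longrightarrow> x \<in> std_simplex"
  by (simp add: equilibrium_power_def)

lemma equilibrium_power_column_sum:
  assumes "equilibrium_power x"
  obtains c where "(mat 1 - M x) *v c = (1 - \<theta> $ i) *\<^sub>R axis i 1"
    and "\<forall>j. 0 \<le> c $ j" and "\<forall>j. c $ j \<le> 1"
    and "x $ i = (\<Sum>j\<in>UNIV. c $ j) / real CARD('n)"
proof -
  obtain c where c: "(mat 1 - M x) *v c = (1 - \<theta> $ i) *\<^sub>R axis i 1"
    and "\<forall>j. 0 \<le> c $ j" "\<forall>j. c $ j \<le> 1"
    using column_solution[OF equilibrium_power_simplex[OF assms]] by blast
  moreover have "scaled_power x v* (mat 1 - M x) = uniform_vec"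
    using assms by (simp add: equilibrium_power_def)
  from transposed_solution_pairing[OF this c]
  have "x $ i = (\<Sum>j\<in>UNIV. c $ j) / real CARD('n)"
    by (simp add: inner_axis' flip: power_eq_scaled_power)
  ultimately show ?thesis using that by blast
qed

lemma equilibrium_power_component:
  assumes "equilibrium_power x"
  shows "scaled_power x $ i
    = (\<Sum>k\<in>UNIV. \<theta> $ k * W x $ k $ i * scaled_power x $ k) + 1 / real CARD('n)"
  using arg_cong[OF conjunct2[OF assms[unfolded equilibrium_power_def]], of "\<lambda>v. v $ i"]
  by (simp add: vector_mat_one_minus_mult_component M_component mult_ac)

lemma inflow_term_nonneg: "x \<in> std_simplex \<Longrightarrow> 0 \<le> \<theta> $ k * W x $ k $ i * scaled_power x $ k"
  using \<theta>_nonneg W_nonneg scaled_power_nonneg by simp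

lemma equilibrium_power_lower_bound:
  assumes "equilibrium_power x"
  shows "(1 - \<theta> $ i) / real CARD('n) \<le> x $ i"
proof -
  have "0 \<le> (\<Sum>k\<in>UNIV. \<theta> $ k * W x $ k $ i * scaled_power x $ k)"
    using inflow_term_nonneg equilibrium_power_simplex[OF assms] by (simp add: sum_nonneg)
  then have "1 / real CARD('n) \<le> scaled_power x $ i"
    using equilibrium_power_component[OF assms, of i] by linarith
  then show ?thesis
    using one_minus_\<theta>_pos[of i] by (simp add: scaled_power_component field_simps)
qed

lemma equilibrium_power_pos:
  assumes "equilibrium_power x" shows "0 < x $ i"
proof -
  have "0 < (1 - \<theta> $ i) / real CARD('n)" using one_minus_\<theta>_pos[of i] by simp
  then show ?thesis using equilibrium_power_lower_bound[OF assms, of i] by linarith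
qed

lemma equilibrium_power_interior: "equilibrium_power x \<Longrightarrow> x \<in> int_std_simplex"
  using equilibrium_power_pos equilibrium_power_simplex
  by (simp add: std_simplex_def int_std_simplex_def)

lemma equilibrium_power_upper_bound:
  assumes "equilibrium_power x"
  shows "x $ i \<le> (1 + (\<Sum>j\<in>UNIV. \<theta> $ j) - \<theta> $ i) / real CARD('n)"
proof -
  obtain c where c: "(mat 1 - M x) *v c = (1 - \<theta> $ i) *\<^sub>R axis i 1"
    and "\<forall>j. c $ j \<le> 1" and x_i: "x $ i = (\<Sum>j\<in>UNIV. c $ j) / real CARD('n)"
    using equilibrium_power_column_sum[OF assms] by metis
  then have "(\<Sum>j\<in>UNIV. c $ j) \<le> (\<Sum>j\<in>UNIV. \<theta> $ j + ((1 - \<theta> $ i) *\<^sub>R axis i 1) $ j)"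
    using column_le[OF equilibrium_power_simplex[OF assms]] by (blast intro: sum_mono)
  also have "\<dots> = 1 + (\<Sum>j\<in>UNIV. \<theta> $ j) - \<theta> $ i"
    by (simp add: sum.distrib axis_def if_distrib[of "\<lambda>t. _ * t"] cong: if_cong)
  finally show ?thesis using x_i by (simp add: divide_right_mono)
qed

lemma equilibrium_power_weight_less_1:
  assumes x: "equilibrium_power x"
    and \<theta>_max: "theta_max \<theta> < real CARD('n) /
      (real CARD('n) + 2 * (1 + (real CARD('n) * theta_ave \<theta> - theta_min \<theta>)))"
  shows "2 * \<theta> $ k * scaled_power x $ k < 1"
proof -
  define n where "n = real CARD('n)"
  define \<zeta> where "\<zeta> = (\<Sum>j\<in>UNIV. \<theta> $ j) - theta_min \<theta>"
  have n_pos: "0 < n" by (simp add: n_def)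
  have "theta_min \<theta> \<le> \<theta> $ k" unfolding theta_min_def by (rule Min_le) auto
  moreover have "\<theta> $ k \<le> (\<Sum>j\<in>UNIV. \<theta> $ j)"
    using \<theta>_nonneg by (intro member_le_sum) auto
  ultimately have \<zeta>_bounds: "0 \<le> \<zeta>" "(\<Sum>j\<in>UNIV. \<theta> $ j) - \<theta> $ k \<le> \<zeta>"
    by (auto simp: \<zeta>_def)
  have "\<theta> $ k \<le> theta_max \<theta>" unfolding theta_max_def by (rule Max_ge) auto
  with \<theta>_max have "\<theta> $ k < n / (n + 2 * (1 + \<zeta>))"
    by (simp add: n_def \<zeta>_def theta_ave_def)
  then have \<theta>_k: "2 * \<theta> $ k * (1 + \<zeta>) < n * (1 - \<theta> $ k)"
    using n_pos \<zeta>_bounds(1) by (simp add: field_simps)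
  have "x $ k \<le> (1 + (\<Sum>j\<in>UNIV. \<theta> $ j) - \<theta> $ k) / n"
    using equilibrium_power_upper_bound[OF x, of k] by (simp add: n_def)
  also have "\<dots> \<le> (1 + \<zeta>) / n"
    using \<zeta>_bounds(2) n_pos by (simp add: divide_right_mono)
  finally have "2 * \<theta> $ k * x $ k \<le> 2 * \<theta> $ k * ((1 + \<zeta>) / n)"
    using \<theta>_nonneg by (intro mult_left_mono) auto
  also have "\<dots> < 1 - \<theta> $ k"
    using \<theta>_k n_pos by (simp add: field_simps)
  finally show ?thesis
    using one_minus_\<theta>_pos[of k] by (simp add: scaled_power_component field_simps)
qed

lemma scaled_power_diff_bound:
  assumes x: "equilibrium_power x" and y: "equilibrium_power y"
  shows "\<bar>scaled_power x $ i - scaled_power y $ i\<bar>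
    \<le> (\<Sum>k\<in>UNIV. \<theta> $ k * W x $ k $ i * \<bar>scaled_power x $ k - scaled_power y $ k\<bar>
          + \<theta> $ k * \<bar>x $ k - y $ k\<bar> * ((if k = i then 1 else 0) + C $ k $ i) * scaled_power y $ k)"
    (is "\<bar>?u i\<bar> \<le> (\<Sum>k\<in>UNIV. ?bound k)")
proof -
  define a where "a k = \<theta> $ k * W x $ k $ i * ?u k" for k
  define b where "b k = \<theta> $ k * (W x $ k $ i - W y $ k $ i) * scaled_power y $ k" for k
  have "?u i = (\<Sum>k\<in>UNIV. \<theta> $ k * W x $ k $ i * scaled_power x $ k
      - \<theta> $ k * W y $ k $ i * scaled_power y $ k)"
    unfolding sum_subtractf
    using equilibrium_power_component[OF x, of i] equilibrium_power_component[OF y, of i]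
    by linarith
  also have "\<dots> = (\<Sum>k\<in>UNIV. a k + b k)"
    by (rule sum.cong) (simp_all add: a_def b_def algebra_simps)
  finally have "\<bar>?u i\<bar> \<le> (\<Sum>k\<in>UNIV. \<bar>a k + b k\<bar>)"
    by (simp add: sum_abs)
  also have "\<dots> \<le> (\<Sum>k\<in>UNIV. ?bound k)"
  proof (rule sum_mono)
    fix k
    have nonneg: "0 \<le> \<theta> $ k" "0 \<le> W x $ k $ i" "0 \<le> C $ k $ i" "0 \<le> scaled_power y $ k"
      using \<theta>_nonneg W_nonneg scaled_power_nonneg C_nonneg equilibrium_power_simplex x y by auto
    have "W x $ k $ i - W y $ k $ i = (x $ k - y $ k) * ((if k = i then 1 else 0) - C $ k $ i)"
      by (simp add: Wmat_component algebra_simps)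
    moreover have "\<bar>(if k = i then 1 else 0) - C $ k $ i\<bar> \<le> (if k = i then 1 else 0) + C $ k $ i"
      using nonneg by auto
    ultimately have "\<bar>b k\<bar>
        \<le> \<theta> $ k * \<bar>x $ k - y $ k\<bar> * ((if k = i then 1 else 0) + C $ k $ i) * scaled_power y $ k"
      using nonneg by (simp add: b_def abs_mult mult_left_mono mult_right_mono mult.assoc)
    moreover have "\<bar>a k\<bar> = \<theta> $ k * W x $ k $ i * \<bar>?u k\<bar>"
      using nonneg by (simp add: a_def abs_mult)
    ultimately show "\<bar>a k + b k\<bar> \<le> ?bound k"
      using abs_triangle_ineq[of "a k" "b k"] by linarith
  qed
  finally show ?thesis .
qed

lemma equilibrium_power_l1_estimate:
  assumes x: "equilibrium_power x" and y: "equilibrium_power y"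
  shows "(\<Sum>k\<in>UNIV. \<bar>x $ k - y $ k\<bar> * (1 - 2 * \<theta> $ k * scaled_power y $ k)) \<le> 0"
proof -
  let ?u = "\<lambda>k. \<bar>scaled_power x $ k - scaled_power y $ k\<bar>"
  let ?d = "\<lambda>k. \<bar>x $ k - y $ k\<bar>"
  have d_eq: "?d k = (1 - \<theta> $ k) * ?u k" for k
    using one_minus_\<theta>_pos[of k]
    by (simp add: power_eq_scaled_power[of x k] power_eq_scaled_power[of y k] abs_mult
        flip: right_diff_distrib)
  have row_sums: "(\<Sum>i\<in>UNIV. W x $ k $ i) = 1"
    "(\<Sum>i\<in>UNIV. (if k = i then 1 else 0) + C $ k $ i) = (2::real)" for k
    by (simp_all add: Wmat_row_sum[OF row_stochastic_C] sum.distrib C_row_sum)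
  have "(\<Sum>i\<in>UNIV. ?u i) \<le> (\<Sum>i\<in>UNIV. \<Sum>k\<in>UNIV. \<theta> $ k * W x $ k $ i * ?u k
      + \<theta> $ k * ?d k * ((if k = i then 1 else 0) + C $ k $ i) * scaled_power y $ k)"
    by (rule sum_mono) (rule scaled_power_diff_bound[OF x y])
  also have "\<dots> = (\<Sum>k\<in>UNIV. \<Sum>i\<in>UNIV. \<theta> $ k * W x $ k $ i * ?u k
      + \<theta> $ k * ?d k * ((if k = i then 1 else 0) + C $ k $ i) * scaled_power y $ k)"
    by (rule sum.swap)
  also have "\<dots> = (\<Sum>k\<in>UNIV. \<theta> $ k * ?u k + 2 * \<theta> $ k * ?d k * scaled_power y $ k)"
    by (simp add: sum.distrib row_sums C_row_sum mult_ac flip: sum_distrib_left sum_distrib_right)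
  finally have "(\<Sum>k\<in>UNIV. (1 - \<theta> $ k) * ?u k - 2 * \<theta> $ k * ?d k * scaled_power y $ k) \<le> 0"
    by (simp add: sum_subtractf sum.distrib left_diff_distrib)
  then show ?thesis
    by (simp add: d_eq algebra_simps)
qed

lemma equilibrium_power_unique:
  assumes x: "equilibrium_power x" and y: "equilibrium_power y"
    and \<theta>_max: "theta_max \<theta> < real CARD('n) /
      (real CARD('n) + 2 * (1 + (real CARD('n) * theta_ave \<theta> - theta_min \<theta>)))"
  shows "x = y"
proof -
  have weight_pos: "0 < 1 - 2 * \<theta> $ k * scaled_power y $ k" for k
    using equilibrium_power_weight_less_1[OF y \<theta>_max, of k] by simp
  then have nonneg: "0 \<le> \<bar>x $ k - y $ k\<bar> * (1 - 2 * \<theta> $ k * scaled_power y $ k)" for k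
    by (simp add: less_imp_le)
  with equilibrium_power_l1_estimate[OF x y]
  have "(\<Sum>k\<in>UNIV. \<bar>x $ k - y $ k\<bar> * (1 - 2 * \<theta> $ k * scaled_power y $ k)) = 0"
    by (meson order_antisym sum_nonneg)
  then have "\<bar>x $ k - y $ k\<bar> * (1 - 2 * \<theta> $ k * scaled_power y $ k) = 0" for k
    using nonneg by (simp add: sum_nonneg_eq_0_iff)
  then have "\<bar>x $ k - y $ k\<bar> = 0" for k
    using weight_pos[of k] by (metis less_irrefl mult_eq_0_iff)
  then show ?thesis by (simp add: vec_eq_iff)
qed

lemma Fmap_continuous: "continuous_on std_simplex (Fmap C \<theta>)"
proof -
  have "Fmap C \<theta> = (\<lambda>x. (mat 1 - diag_mat \<theta>) *v (matrix_inv (transpose (mat 1 - M x)) *v uniform_vec))"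
    by (simp add: fun_eq_iff Fmap_def transpose_I_minus_M uniform_vec_def)
  moreover have "continuous_on std_simplex (\<lambda>x. transpose (mat 1 - M x) $ i $ j)" for i j
  proof -
    have eq: "(\<lambda>x. transpose (mat 1 - M x) $ i $ j)
        = (\<lambda>x. (if i = j then 1 else 0) - \<theta> $ j * ((if j = i then x $ j else 0) + (1 - x $ j) * C $ j $ i))"
      by (simp add: fun_eq_iff transpose_def M_component Wmat_component mat_one_component)
    show ?thesis unfolding eq by (cases "i = j") (auto intro!: continuous_intros)
  qed
  ultimately show ?thesis
    using invertible_I_minus_M transpose_invertible
    by (auto intro!: continuous_on_compose2[OF matrix_vector_mult_linear_continuous_on]
        continuous_on_matrix_inv_mult)
qed

lemma Fmap_in_std_simplex:
  assumes x: "x \<in> std_simplex"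
  shows "Fmap C \<theta> x \<in> std_simplex"
proof -
  define y where "y = uniform_vec v* matrix_inv (mat 1 - M x)"
  have y: "y v* (mat 1 - M x) = uniform_vec"
    by (simp add: y_def vector_matrix_mul_assoc matrix_inv_left invertible_I_minus_M[OF x])
  have F: "Fmap C \<theta> x $ j = (1 - \<theta> $ j) * y $ j" for j
    by (simp add: Fmap_eq[OF x] y_def mat_one_minus_diag_mat diag_mat_mult_vec_component)
  have "0 \<le> Fmap C \<theta> x $ i" for i
  proof -
    obtain c where c: "(mat 1 - M x) *v c = (1 - \<theta> $ i) *\<^sub>R axis i 1" and "\<forall>j. 0 \<le> c $ j"
      using column_solution[OF x] by metis
    then show ?thesis
      using transposed_solution_pairing[OF y c] by (simp add: F inner_axis' sum_nonneg)
  qed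
  moreover have "(\<Sum>j\<in>UNIV. Fmap C \<theta> x $ j) = 1"
    using transposed_solution_pairing[OF y I_minus_M_ones] by (simp add: F inner_vec_def ones_vec_def)
  ultimately show ?thesis by (simp add: std_simplex_def)
qed

lemma equilibrium_A_exists: "\<exists>x. equilibrium_A C \<theta> x"
  using brouwer[OF compact_std_simplex convex_std_simplex _ Fmap_continuous] Fmap_in_std_simplex
    uniform_vec_in_std_simplex
  unfolding equilibrium_A_def by blast

lemma equilibrium_B_of_equilibrium_A:
  assumes "equilibrium_A C \<theta> x"
  shows "equilibrium_B C \<theta> (matrix_inv (mat 1 - M x) ** (mat 1 - diag_mat \<theta>)) x"
proof -
  have x: "x \<in> std_simplex" and fixed: "Fmap C \<theta> x = x"
    using assms by (auto simp: equilibrium_A_def)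
  define V where "V = matrix_inv (mat 1 - M x) ** (mat 1 - diag_mat \<theta>)"
  have IV: "(mat 1 - M x) ** V = mat 1 - diag_mat \<theta>"
    by (simp add: V_def matrix_mul_assoc matrix_inv_right invertible_I_minus_M[OF x])
  have V_nonneg: "0 \<le> V $ j $ i" for i j
  proof -
    have "(mat 1 - M x) *v (V *v axis i 1) = (mat 1 - diag_mat \<theta>) *v axis i 1"
      by (simp add: matrix_vector_mul_assoc IV)
    then have "0 \<le> (V *v axis i 1) $ j"
      by (rule I_minus_M_solution_nonneg[OF x])
        (simp add: mat_one_minus_diag_mat diag_mat_mult_vec_component axis_def less_imp_le \<theta>_less_1)
    then show ?thesis by (simp add: matrix_vector_mult_basis column_def)
  qed
  have "V *v ones_vec = matrix_inv (mat 1 - M x) *v ((mat 1 - diag_mat \<theta>) *v ones_vec)"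
    by (simp add: V_def matrix_vector_mul_assoc)
  also have "(mat 1 - diag_mat \<theta>) *v ones_vec = (mat 1 - M x) *v ones_vec"
    unfolding I_minus_M_ones
    by (simp add: mat_one_minus_diag_mat diag_mat_mult_vec_component vec_eq_iff ones_vec_def)
  also have "matrix_inv (mat 1 - M x) *v ((mat 1 - M x) *v ones_vec) = ones_vec"
    by (simp add: matrix_vector_mul_assoc matrix_inv_left invertible_I_minus_M[OF x])
  finally have V_row_sum: "(\<Sum>i\<in>UNIV. V $ j $ i) = 1" for j
    by (simp add: vec_eq_iff matrix_vector_mult_component ones_vec_def)
  have "x = Fmap C \<theta> x" using fixed by simp
  also have "\<dots> = (mat 1 - diag_mat \<theta>) *v (uniform_vec v* matrix_inv (mat 1 - M x))"
    by (rule Fmap_eq[OF x])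
  also have "\<dots> = uniform_vec v* V"
    by (simp add: V_def mat_one_minus_diag_mat vector_mult_diag_mat flip: vector_matrix_mul_assoc)
  finally have "equilibrium_B C \<theta> V x"
    using x V_nonneg V_row_sum IV
    by (simp add: equilibrium_B_def equilibrium_B_matrix_eq_iff row_stochastic_def uniform_vec_def)
  then show ?thesis by (simp add: V_def)
qed

end

locale social_power_model = influence_model C \<theta>
  for C :: "real^'n^'n" and \<theta> :: "real^'n" +
  assumes card_ge_2: "CARD('n) \<ge> 2" and zero_diag_C: "zero_diag C"
begin

lemma equilibrium_power_less_1:
  assumes x: "equilibrium_power x"
  shows "x $ k < 1"
proof -
  obtain l where "l \<noteq> k"
    using card_ge_2 by (metis UNIV_I card_2_iff' card_le_Suc0_iff_eq finite not_less_eq_eq numeral_2_eq_2)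
  then have "x $ k + x $ l \<le> 1"
    by (intro std_simplex_add_le_1[OF equilibrium_power_simplex[OF x]]) auto
  with equilibrium_power_pos[OF x, of l] show ?thesis by linarith
qed

lemma W_diag: "W x $ i $ i = x $ i"
  using zero_diag_C by (simp add: Wmat_component zero_diag_def)

lemma fully_stubborn_power:
  assumes x: "equilibrium_power x" and \<theta>_i: "\<theta> $ i = 0"
  shows "1 / real CARD('n) \<le> x $ i"
    and "x $ i = 1 / real CARD('n) \<longleftrightarrow> (\<forall>j. 0 < \<theta> $ j \<longrightarrow> C $ j $ i = 0)"
proof -
  let ?f = "\<lambda>k. \<theta> $ k * W x $ k $ i * scaled_power x $ k"
  have f_nonneg: "0 \<le> ?f k" for k
    using inflow_term_nonneg equilibrium_power_simplex[OF x] by blast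
  have x_i: "x $ i = (\<Sum>k\<in>UNIV. ?f k) + 1 / real CARD('n)"
    using equilibrium_power_component[OF x, of i] \<theta>_i by (simp add: scaled_power_component)
  then show "1 / real CARD('n) \<le> x $ i"
    using f_nonneg by (simp add: sum_nonneg)
  have "?f k = 0 \<longleftrightarrow> (0 < \<theta> $ k \<longrightarrow> C $ k $ i = 0)" for k
  proof (cases "k = i")
    case False
    have "0 < x $ k" "x $ k < 1" "0 < 1 - \<theta> $ k"
      using equilibrium_power_pos[OF x] equilibrium_power_less_1[OF x] one_minus_\<theta>_pos by auto
    then show ?thesis
      using False \<theta>_nonneg[rule_format, of k] by (auto simp: Wmat_component scaled_power_component)
  qed (simp add: \<theta>_i)
  then show "x $ i = 1 / real CARD('n) \<longleftrightarrow> (\<forall>j. 0 < \<theta> $ j \<longrightarrow> C $ j $ i = 0)"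
    using x_i f_nonneg by (simp add: sum_nonneg_eq_0_iff)
qed

lemma partially_stubborn_power_gt:
  assumes x: "equilibrium_power x" and \<theta>_i: "0 < \<theta> $ i"
  shows "(1 - \<theta> $ i) / real CARD('n) < x $ i"
proof -
  let ?f = "\<lambda>k. \<theta> $ k * W x $ k $ i * scaled_power x $ k"
  have "?f i \<le> (\<Sum>k\<in>UNIV. ?f k)"
    using inflow_term_nonneg equilibrium_power_simplex[OF x] by (intro member_le_sum) auto
  moreover have "0 < ?f i"
    using equilibrium_power_pos[OF x] one_minus_\<theta>_pos \<theta>_i by (simp add: W_diag scaled_power_component)
  ultimately have "1 / real CARD('n) < scaled_power x $ i"
    using equilibrium_power_component[OF x, of i] by linarith
  then show ?thesis
    using one_minus_\<theta>_pos[of i] by (simp add: scaled_power_component field_simps)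
qed

lemma partially_stubborn_power_lt_uniform:
  assumes x: "equilibrium_power x" and \<theta>_i: "0 < \<theta> $ i"
    and no_inflow: "\<forall>j. 0 < \<theta> $ j \<longrightarrow> C $ j $ i = 0"
  shows "x $ i < 1 / real CARD('n)"
proof -
  let ?f = "\<lambda>k. \<theta> $ k * W x $ k $ i * scaled_power x $ k"
  have x_i: "0 < x $ i" "x $ i < 1" and t_i: "0 < 1 - \<theta> $ i"
    using equilibrium_power_pos[OF x] equilibrium_power_less_1[OF x] one_minus_\<theta>_pos by auto
  have "?f k = 0" if "k \<noteq> i" for k
    using that no_inflow \<theta>_nonneg[rule_format, of k] by (cases "0 < \<theta> $ k") (auto simp: Wmat_component)
  then have "(\<Sum>k\<in>UNIV - {i}. ?f k) = 0" by (intro sum.neutral) auto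
  then have "(\<Sum>k\<in>UNIV. ?f k) = \<theta> $ i * x $ i * scaled_power x $ i"
    by (simp add: sum.remove[of UNIV i] W_diag)
  then have s_eq: "scaled_power x $ i = \<theta> $ i * x $ i * scaled_power x $ i + 1 / real CARD('n)"
    using equilibrium_power_component[OF x, of i] by simp
  have "(1 - \<theta> $ i) * scaled_power x $ i
      = (1 - \<theta> $ i) * (\<theta> $ i * x $ i * scaled_power x $ i + 1 / real CARD('n))"
    using s_eq by (rule arg_cong)
  also have "\<dots> = \<theta> $ i * x $ i * ((1 - \<theta> $ i) * scaled_power x $ i) + (1 - \<theta> $ i) / real CARD('n)"
    by (simp add: algebra_simps)
  finally have "x $ i = \<theta> $ i * x $ i * x $ i + (1 - \<theta> $ i) / real CARD('n)"
    by (simp flip: power_eq_scaled_power)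
  moreover have "\<theta> $ i * x $ i * x $ i < \<theta> $ i * x $ i"
    using x_i \<theta>_i by simp
  ultimately have "x $ i * (1 - \<theta> $ i) < (1 / real CARD('n)) * (1 - \<theta> $ i)"
    by (simp add: algebra_simps)
  then show ?thesis
    using t_i by (meson mult_less_cancel_right_pos)
qed

lemma equilibrium_power_less_uniform_plus_average:
  assumes x: "equilibrium_power x" and \<theta>_pos: "\<exists>j. 0 < \<theta> $ j"
  shows "x $ i < 1 / real CARD('n) + theta_ave \<theta>"
proof -
  define r :: "real^'n" where "r = (1 - \<theta> $ i) *\<^sub>R axis i 1"
  obtain c where c: "(mat 1 - M x) *v c = r" and c_le_1: "\<forall>j. c $ j \<le> 1"
    and x_i: "x $ i = (\<Sum>j\<in>UNIV. c $ j) / real CARD('n)"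
    using equilibrium_power_column_sum[OF x, of i] unfolding r_def by metis
  have c_le: "c $ j \<le> \<theta> $ j + r $ j" for j
    using column_le[OF equilibrium_power_simplex[OF x] c c_le_1] .
  have sum_bound: "(\<Sum>j\<in>UNIV. \<theta> $ j + r $ j) = 1 + (\<Sum>j\<in>UNIV. \<theta> $ j) - \<theta> $ i"
    by (simp add: r_def sum.distrib axis_def if_distrib[of "\<lambda>t. _ * t"] cong: if_cong)
  have "(\<Sum>j\<in>UNIV. c $ j) < 1 + (\<Sum>j\<in>UNIV. \<theta> $ j)"
  proof (cases "0 < \<theta> $ i")
    case True
    then show ?thesis
      using sum_mono[of UNIV "\<lambda>j. c $ j", OF c_le] sum_bound by linarith
  next
    case False
    then have \<theta>_i: "\<theta> $ i = 0" using \<theta>_nonneg[rule_format, of i] by linarith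
    obtain j where \<theta>_j: "0 < \<theta> $ j" using \<theta>_pos by blast
    with \<theta>_i have "j \<noteq> i" by auto
    then have "c $ j < \<theta> $ j + r $ j"
      using column_less_\<theta>[OF equilibrium_power_simplex[OF x] c c_le_1 _ \<theta>_j]
        equilibrium_power_pos[OF x] equilibrium_power_less_1[OF x]
      by (simp add: r_def axis_def)
    then have "(\<Sum>j\<in>UNIV. c $ j) < (\<Sum>j\<in>UNIV. \<theta> $ j + r $ j)"
      using c_le by (intro sum_strict_mono_ex1) auto
    then show ?thesis using sum_bound \<theta>_i by simp
  qed
  then have "x $ i < (1 + (\<Sum>j\<in>UNIV. \<theta> $ j)) / real CARD('n)"
    using x_i by (simp add: divide_strict_right_mono)
  then show ?thesis by (simp add: theta_ave_def add_divide_distrib)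
qed

lemma equilibrium_power_props:
  assumes "equilibrium_power x" and "\<exists>j. 0 < \<theta> $ j"
  shows "eq_power_props C \<theta> x"
proof -
  have "Max (range (\<lambda>i. x $ i)) < 1 / real CARD('n) + theta_ave \<theta>"
    using equilibrium_power_less_uniform_plus_average[OF assms] by simp
  moreover have "0 < \<theta> $ i" if "\<theta> $ i \<noteq> 0" for i
    using that \<theta>_nonneg[rule_format, of i] by linarith
  ultimately show ?thesis
    unfolding eq_power_props_def
    using equilibrium_power_interior fully_stubborn_power partially_stubborn_power_gt
      partially_stubborn_power_lt_uniform assms(1) by blast
qed

end

theorem theorem1:
  fixes C :: "real^'n^'n" and \<theta> :: "real^'n"
  assumes n2: "CARD('n) \<ge> 2"
    and C_rs: "row_stochastic C" and C_zd: "zero_diag C"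
    and \<theta>_ge: "\<forall>i. 0 \<le> \<theta> $ i" and \<theta>_lt: "\<forall>i. \<theta> $ i < 1"
    and \<theta>_pos: "\<exists>j. \<theta> $ j > 0"
  shows "(\<exists>x. equilibrium_A C \<theta> x) \<and> (\<exists>V x. equilibrium_B C \<theta> V x) \<and>
         (\<forall>x. equilibrium_A C \<theta> x \<longrightarrow> eq_power_props C \<theta> x) \<and>
         (\<forall>V x. equilibrium_B C \<theta> V x \<longrightarrow> eq_power_props C \<theta> x) \<and>
         (theta_max \<theta> < real CARD('n) /
             (real CARD('n) + 2 * (1 + (real CARD('n) * theta_ave \<theta> - theta_min \<theta>))) \<longrightarrow>
            (\<forall>x y. equilibrium_A C \<theta> x \<longrightarrow> equilibrium_A C \<theta> y \<longrightarrow> x = y) \<and>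
            (\<forall>V x W y. equilibrium_B C \<theta> V x \<longrightarrow> equilibrium_B C \<theta> W y \<longrightarrow> x = y))"
proof -
  interpret social_power_model C \<theta>
    using n2 C_rs C_zd \<theta>_ge \<theta>_lt by unfold_locales
  obtain x where x: "equilibrium_A C \<theta> x"
    using equilibrium_A_exists by blast
  moreover have "\<exists>V x. equilibrium_B C \<theta> V x"
    using equilibrium_B_of_equilibrium_A[OF x] by blast
  moreover have "eq_power_props C \<theta> x" if "equilibrium_A C \<theta> x" for x
    using equilibrium_power_props[OF equilibrium_A_imp_equilibrium_power[OF that] \<theta>_pos] .
  moreover have "eq_power_props C \<theta> x" if "equilibrium_B C \<theta> V x" for V x
    using equilibrium_power_props[OF equilibrium_B_imp_equilibrium_power[OF that] \<theta>_pos] .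
  moreover note equilibrium_power_unique[OF equilibrium_A_imp_equilibrium_power
      equilibrium_A_imp_equilibrium_power]
    equilibrium_power_unique[OF equilibrium_B_imp_equilibrium_power
      equilibrium_B_imp_equilibrium_power]
  ultimately show ?thesis by blast
qed

end
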